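(* In the setting described in the context, fix $R\in\Gamma$. Then for every $t\in[0,p|R|r^2]$, \[\mathbb{P}\Big\{\big|\|X_{R'}\|_{2\to2}^2-p\|X_R\|_{2\to2}^2\big|\ge t\Big\}\le (3d+3)\exp\Big(-\frac{t^2}{48p|R|r^4}\Big).\]
   Context: Let $X=\{x_i\}_{i\in[n]}$ be points in $\mathbb{R}^d$ and $\Gamma$ a partition of $[n]$ into $k$ nonempty sets. For nonempty $S\subseteq[n]$, $c_S:=\frac1{|S|}\sum_{i\in S}x_i$, and $X_S$ denotes the $d\times n$ matrix whose $i$-th column is $x_i-c_S$ if $i\in S$ and $0$ otherwise. Let $r:=\max_{S\in\Gamma}\max_{i\in S}\|x_i-c_S\|$. Let $p\in(0,1]$ and let $W\subseteq[n]$ be random, containing each index independently with probability $p$; for $S\in\Gamma$ put $S':=S\cap W$ (so $X_{R'}$ has columns $x_i-c_{R'}$ for $i\in R'$ and zero otherwise; it is undefined when $R'=\emptyset$). *)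

theory Defs
  imports "HOL-Probability.Probability" "HOL-Library.Disjoint_Sets"
begin

text \<open>Points are indexed by a finite type 'n (so [n] is UNIV :: 'n set, n = CARD('n));
  they live in real^'d (so d = CARD('d)).\<close>

definition centroid :: "('n \<Rightarrow> real^'d) \<Rightarrow> 'n set \<Rightarrow> real^'d" where
  "centroid x S = (1 / real (card S)) *\<^sub>R (\<Sum>i\<in>S. x i)"

definition Xmat :: "('n::finite \<Rightarrow> real^'d) \<Rightarrow> 'n set \<Rightarrow> real^'n^'d" where
  "Xmat x S = (\<chi> j i. if i \<in> S then (x i - centroid x S) $ j else 0)"

definition opnorm2 :: "real^'n^'d \<Rightarrow> real" where
  "opnorm2 A = onorm (\<lambda>v. A *v v)"

definition radius :: "('n::finite \<Rightarrow> real^'d) \<Rightarrow> 'n set set \<Rightarrow> real" where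
  "radius x \<Gamma> = Max {norm (x i - centroid x S) | S i. S \<in> \<Gamma> \<and> i \<in> S}"

end

theory Submission
  imports Defs
begin

(* Put y_i = x_i - c_R.  The y_i sum to zero, so the centroid of R' is c_R + v / |R'| with
   v = sum_i (b_i - p) y_i, and for every direction u
     u^T X_R' X_R'^T u - p u^T X_R X_R^T u = <F, u u^T> - (u . v)^2 / |R'|,   F = sum_i (b_i - p) y_i y_i^T.
   Hence the deviation of the squared operator norms is at most ||F||_F + ||v||^2 / |R'|.
   Now F, v and |R'| - p |R| are centred Bernoulli sums, in inner-product spaces, of vectors of norm
   at most r^2, r and 1.  For such sums Pinelis' estimate
     E cosh (l ||sum_i (b_i - p) Y_i||) <= prod_i (1 + p (exp (l ||Y_i||) - 1 - l ||Y_i||))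
   and Markov's inequality give the dimension-free tail bound 2 exp (- s^2 / (12 p |R| L^2)) for
   s <= p |R| L / 2.  A deviation of at least t forces ||F|| >= t/2, or ||R'| - p |R|| >= p |R| / 2,
   or ||v|| >= sqrt (t p |R|) / 2; each of these has probability at most 2 exp (- t^2 / (48 p |R| r^4)),
   and 6 <= 3 d + 3. *)

section \<open>Power series estimates\<close>

lemma cosh_even_series: "(\<lambda>k. x ^ (2*k) / fact (2*k)) sums cosh (x::real)"
proof -
  have "{2*k..<2*k+2} = {2*k, Suc (2*k)}" for k :: nat by auto
  then have "(\<lambda>k. \<Sum>j\<in>{k*2..<k*2+2}. if even j then x ^ j /\<^sub>R fact j else 0) = (\<lambda>k. x ^ (2*k) / fact (2*k))"
    by (simp add: mult.commute divide_inverse)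
  then show ?thesis using sums_group[OF cosh_converges[of x], of 2] by simp
qed

lemma sinh_odd_series: "(\<lambda>k. x ^ (2*k+1) / fact (2*k+1)) sums sinh (x::real)"
proof -
  have "{2*k..<2*k+2} = {2*k, Suc (2*k)}" for k :: nat by auto
  then have "(\<lambda>k. \<Sum>j\<in>{k*2..<k*2+2}. if even j then 0 else x ^ j /\<^sub>R fact j) = (\<lambda>k. x ^ (2*k+1) / fact (2*k+1))"
    by (simp add: mult.commute divide_inverse)
  then show ?thesis using sums_group[OF sinh_converges[of x], of 2] by simp
qed

lemma cosh_sqrt_series:
  assumes "0 \<le> s"
  shows "(\<lambda>k. l ^ (2*k) * s ^ k / fact (2*k)) sums cosh (l * sqrt s)"
proof -
  have "(l * sqrt s) ^ (2*k) = l ^ (2*k) * s ^ k" for k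
    using assms by (simp add: power_mult_distrib power_mult)
  then show ?thesis using cosh_even_series[of "l * sqrt s"] by simp
qed

lemma cosh_even_series_deriv:
  "(\<lambda>k. l ^ (2*k) / fact (2*k) * (2 * real k * a ^ (2*k-1))) sums (l * sinh (l * a :: real))"
proof -
  have "l ^ (2 * Suc k) / fact (2 * Suc k) * (2 * real (Suc k) * a ^ (2 * Suc k - 1))
      = l * ((l * a) ^ (2*k+1) / fact (2*k+1))" for k
  proof -
    have cancel: "l * l ^ j / (c * F) * (c * a ^ j) = l * ((l * a) ^ j / F)"
      if "c \<noteq> 0" for c F :: real and j :: nat
      using that by (simp add: power_mult_distrib)
    have e1: "fact (2 * Suc k) = 2 * real (Suc k) * (fact (2*k+1) :: real)"
      by (simp only: fact_Suc mult_2 add_Suc_right of_nat_Suc) (simp add: algebra_simps)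
    have e2: "l ^ (2 * Suc k) = l * l ^ (2*k+1)" and e3: "2 * Suc k - 1 = 2*k+1" by simp_all
    show ?thesis unfolding e1 e2 e3 by (rule cancel) simp
  qed
  then have "(\<lambda>k. l ^ (2 * Suc k) / fact (2 * Suc k) * (2 * real (Suc k) * a ^ (2 * Suc k - 1)))
      sums (l * sinh (l * a))"
    using sums_mult[OF sinh_odd_series, of l "l * a"] by (simp only:)
  then show ?thesis
    using sums_Suc_iff[of "\<lambda>k. l ^ (2*k) / fact (2*k) * (2 * real k * a ^ (2*k-1))"] by simp
qed

lemma sinh_ge_self:
  assumes "0 \<le> x"
  shows "x \<le> sinh (x::real)"
proof -
  have "(\<Sum>k\<in>{0}. x ^ (2*k+1) / fact (2*k+1)) \<le> (\<Sum>k. x ^ (2*k+1) / fact (2*k+1))"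
    using sinh_odd_series[of x] assms by (intro sum_le_suminf) (auto simp: sums_iff)
  then show ?thesis using sinh_odd_series[of x] by (simp add: sums_iff)
qed

definition exp_rem :: "real \<Rightarrow> real" where
  "exp_rem u = exp u - 1 - u"

lemma exp_rem_nonneg: "0 \<le> exp_rem u"
  unfolding exp_rem_def using exp_ge_add_one_self[of u] by linarith

lemma exp_rem_mono:
  assumes "0 \<le> u" "u \<le> v"
  shows "exp_rem u \<le> exp_rem v"
proof -
  have "exp u * (1 + (v - u)) \<le> exp u * exp (v - u)"
    by (intro mult_left_mono exp_ge_add_one_self) simp
  also have "\<dots> = exp v" by (simp flip: exp_add)
  finally have "exp u + exp u * (v - u) \<le> exp v" by (simp add: algebra_simps)
  moreover have "v - u \<le> exp u * (v - u)"
    using assms mult_right_mono[of 1 "exp u" "v - u"] by simp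
  ultimately show ?thesis by (simp add: exp_rem_def)
qed

lemma exp_rem_le_sq:
  assumes "0 \<le> g" "g \<le> 1/2"
  shows "exp_rem g \<le> 11/12 * g\<^sup>2"
proof -
  have half: "exp (g/2) \<le> 1 + g/2 + (g/2)\<^sup>2" using assms by (intro exp_bound) auto
  have "exp g = (exp (g/2))\<^sup>2" by (simp add: power2_eq_square flip: exp_add)
  also have "\<dots> \<le> (1 + g/2 + (g/2)\<^sup>2)\<^sup>2"
    using half by (intro power_mono) auto
  also have "\<dots> = 1 + g + 3/4 * g\<^sup>2 + g * g\<^sup>2 / 4 + g\<^sup>2 * g\<^sup>2 / 16"
    by (simp add: power2_eq_square algebra_simps)
  also have "\<dots> \<le> 1 + g + 3/4 * g\<^sup>2 + (1/2) * g\<^sup>2 / 4 + (1/4) * g\<^sup>2 / 16"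
  proof -
    have "g\<^sup>2 \<le> 1/4" using assms power_mono[of g "1/2" 2] by (simp add: power2_eq_square)
    then show ?thesis using assms by (intro add_mono divide_right_mono mult_right_mono) auto
  qed
  finally have "exp g \<le> 1 + g + 57/64 * g\<^sup>2" by simp
  then show ?thesis unfolding exp_rem_def using zero_le_power2[of g] by linarith
qed

lemma power_taylor_rem_le:
  fixes A D x \<theta> :: real
  assumes "0 \<le> A" "0 \<le> D" "0 \<le> \<theta>" "\<theta> \<le> 1" "\<bar>x\<bar> \<le> \<theta> * D"
  shows "(A + x) ^ k - A ^ k - k * A ^ (k-1) * x \<le> \<theta>\<^sup>2 * ((A + D) ^ k - A ^ k - k * A ^ (k-1) * D)"
proof -
  define h where "h j = (if j < 2 then 0 else real (k choose j) * A ^ (k-j))" for j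
  have expand: "(A + y) ^ k - A ^ k - k * A ^ (k-1) * y = (\<Sum>j\<le>k. h j * y ^ j)" for y
  proof -
    have "(A + y) ^ k = (\<Sum>j\<le>k. real (k choose j) * y ^ j * A ^ (k-j))"
      by (subst add.commute) (rule binomial_ring)
    also have "\<dots> = (\<Sum>j\<le>k. h j * y ^ j + (if j = 0 then A ^ k else 0)
                       + (if j = 1 then k * A ^ (k-1) * y else 0))"
      by (intro sum.cong refl) (auto simp: h_def)
    also have "\<dots> = (\<Sum>j\<le>k. h j * y ^ j) + A ^ k + k * A ^ (k-1) * y"
      by (cases k) (auto simp: sum.distrib)
    finally show ?thesis by simp
  qed
  have "h j * x ^ j \<le> \<theta>\<^sup>2 * (h j * D ^ j)" for j
  proof (cases "j < 2")
    case False
    have "x ^ j \<le> (\<theta> * D) ^ j"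
      using assms(5) power_mono[of "\<bar>x\<bar>" "\<theta> * D" j] by (metis abs_ge_self power_abs order_trans abs_ge_zero)
    also have "\<dots> \<le> \<theta>\<^sup>2 * D ^ j"
      using False assms(2-4) by (simp add: power_mult_distrib mult_right_mono power_decreasing)
    finally have "x ^ j \<le> \<theta>\<^sup>2 * D ^ j" .
    moreover have "0 \<le> h j" using assms(1) by (simp add: h_def)
    ultimately show ?thesis by (metis mult_left_mono mult.left_commute)
  qed (simp add: h_def)
  then show ?thesis unfolding expand by (simp add: sum_distrib_left sum_mono)
qed

lemma two_point_power_mean_le:
  fixes A D E B0 B1 p :: real
  assumes AD: "0 \<le> A" "0 \<le> D" and p: "0 \<le> p" "p \<le> 1" and E: "0 \<le> E"
    and B1: "\<bar>B1\<bar> \<le> (1-p) * D" and B0: "\<bar>B0\<bar> \<le> p * D"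
    and mean: "p * B1 + (1-p) * B0 = p * (1-p) * E"
  shows "p * (A + B1) ^ k + (1-p) * (A + B0) ^ k \<le> (1-p) * A ^ k + p * ((A + D) ^ k - k * A ^ (k-1) * (D - E))"
proof -
  define \<rho> where "\<rho> y = (A + y) ^ k - A ^ k - k * A ^ (k-1) * y" for y
  have \<rho>B1: "\<rho> B1 \<le> (1-p)\<^sup>2 * \<rho> D"
    unfolding \<rho>_def using AD p B1 by (intro power_taylor_rem_le) auto
  have \<rho>B0: "\<rho> B0 \<le> p\<^sup>2 * \<rho> D"
    unfolding \<rho>_def using AD p B0 by (intro power_taylor_rem_le) auto
  \<comment> \<open>\<open>\<rho> D \<ge> 0\<close> is the case \<open>x = 0\<close>, \<open>\<theta> = 1\<close> of the same estimate.\<close>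
  have "\<rho> 0 \<le> 1\<^sup>2 * \<rho> D"
    unfolding \<rho>_def using AD by (intro power_taylor_rem_le) auto
  moreover have "0 \<le> k * A ^ (k-1) * E" using AD E by simp
  ultimately have X: "0 \<le> k * A ^ (k-1) * E + \<rho> D" by (simp add: \<rho>_def)
  have "p * (A + B1) ^ k + (1-p) * (A + B0) ^ k
        = A ^ k + k * A ^ (k-1) * (p * B1 + (1-p) * B0) + p * \<rho> B1 + (1-p) * \<rho> B0"
    by (simp add: \<rho>_def algebra_simps)
  also have "\<dots> = A ^ k + k * A ^ (k-1) * (p * (1-p) * E) + p * \<rho> B1 + (1-p) * \<rho> B0"
    unfolding mean ..
  also have "\<dots> \<le> A ^ k + k * A ^ (k-1) * (p * (1-p) * E)
                    + p * ((1-p)\<^sup>2 * \<rho> D) + (1-p) * (p\<^sup>2 * \<rho> D)"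
    using mult_left_mono[OF \<rho>B1, of p] mult_left_mono[OF \<rho>B0, of "1-p"] p by linarith
  also have "\<dots> = A ^ k + p * (1-p) * (k * A ^ (k-1) * E + \<rho> D)"
    by (simp add: algebra_simps power2_eq_square)
  also have "\<dots> \<le> A ^ k + p * (k * A ^ (k-1) * E + \<rho> D)"
    using mult_nonneg_nonneg[OF mult_nonneg_nonneg[OF p(1) p(1)] X] by (simp add: algebra_simps)
  also have "\<dots> = (1-p) * A ^ k + p * ((A + D) ^ k - k * A ^ (k-1) * (D - E))"
    by (simp add: \<rho>_def algebra_simps)
  finally show ?thesis .
qed

lemma abs_sq_increment_le:
  fixes a L c \<theta> :: real
  assumes "0 \<le> \<theta>" "\<theta> \<le> 1" "\<bar>c\<bar> \<le> a * L"
  shows "\<bar>2*\<theta>*c + \<theta>\<^sup>2*L\<^sup>2\<bar> \<le> \<theta> * (2*a*L + L\<^sup>2)"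
proof -
  have "\<bar>2*\<theta>*c + \<theta>\<^sup>2*L\<^sup>2\<bar> \<le> 2*\<theta> * \<bar>c\<bar> + \<theta>\<^sup>2 * L\<^sup>2"
    using abs_triangle_ineq[of "2*\<theta>*c" "\<theta>\<^sup>2*L\<^sup>2"] assms by (simp add: abs_mult)
  also have "\<dots> \<le> 2*\<theta> * (a*L) + \<theta> * L\<^sup>2"
    using assms by (intro add_mono mult_left_mono mult_right_mono) (auto simp: power2_eq_square mult_left_le_one_le)
  finally show ?thesis by (simp add: algebra_simps)
qed

(* The two sides are the coefficients of l^(2k) / (2k)! in the two sides of cosh_norm_two_point_le,
   with a = norm w, L = norm Y and c = w \<bullet> Y. *)
lemma two_point_power_le:
  fixes a L c p :: real
  assumes a: "0 \<le> a" and L: "0 \<le> L" and c: "\<bar>c\<bar> \<le> a * L" and p: "0 \<le> p" "p \<le> 1"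
  shows "p * (a\<^sup>2 + 2*(1-p)*c + (1-p)\<^sup>2*L\<^sup>2) ^ k + (1-p) * (a\<^sup>2 - 2*p*c + p\<^sup>2*L\<^sup>2) ^ k
         \<le> (1-p) * a ^ (2*k) + p * ((a+L) ^ (2*k) - 2 * real k * a ^ (2*k-1) * L)"
proof -
  define D where "D = 2*a*L + L\<^sup>2"
  have "\<bar>2*(1-p)*c + (1-p)\<^sup>2*L\<^sup>2\<bar> \<le> (1-p) * D" "\<bar>2*p*(-c) + p\<^sup>2*L\<^sup>2\<bar> \<le> p * D"
    unfolding D_def using p c by (intro abs_sq_increment_le; simp)+
  then have "p * (a\<^sup>2 + (2*(1-p)*c + (1-p)\<^sup>2*L\<^sup>2)) ^ k + (1-p) * (a\<^sup>2 + (2*p*(-c) + p\<^sup>2*L\<^sup>2)) ^ k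
      \<le> (1-p) * (a\<^sup>2) ^ k + p * ((a\<^sup>2 + D) ^ k - k * (a\<^sup>2) ^ (k-1) * (D - L\<^sup>2))"
    using a L p by (intro two_point_power_mean_le) (auto simp: D_def algebra_simps power2_eq_square)
  moreover have "k * (a\<^sup>2) ^ (k-1) * (D - L\<^sup>2) = 2 * real k * a ^ (2*k-1) * L"
  proof (cases k)
    case (Suc m)
    then show ?thesis by (simp add: D_def power_mult[symmetric] algebra_simps)
  qed simp
  moreover have "a\<^sup>2 + D = (a+L)\<^sup>2" by (simp add: D_def power2_eq_square algebra_simps)
  then have "(a\<^sup>2 + D) ^ k = (a+L) ^ (2*k)" "(a\<^sup>2) ^ k = a ^ (2*k)" by (simp_all add: power_mult)
  moreover have "a\<^sup>2 + (2*(1-p)*c + (1-p)\<^sup>2*L\<^sup>2) = a\<^sup>2 + 2*(1-p)*c + (1-p)\<^sup>2*L\<^sup>2"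
    "a\<^sup>2 + (2*p*(-c) + p\<^sup>2*L\<^sup>2) = a\<^sup>2 - 2*p*c + p\<^sup>2*L\<^sup>2" by simp_all
  ultimately show ?thesis by (simp only:)
qed

lemma cosh_two_point_series:
  "(\<lambda>k. l ^ (2*k) / fact (2*k) * ((1-p) * a ^ (2*k) + p * ((a+L) ^ (2*k) - 2 * real k * a ^ (2*k-1) * L)))
     sums ((1-p) * cosh (l*a) + p * (cosh (l*(a+L)) - L * (l * sinh (l*a))))"
proof -
  have "(\<lambda>k. (1-p) * ((l*a) ^ (2*k) / fact (2*k)) + p * ((l*(a+L)) ^ (2*k) / fact (2*k)
           - L * (l ^ (2*k) / fact (2*k) * (2 * real k * a ^ (2*k-1)))))
      sums ((1-p) * cosh (l*a) + p * (cosh (l*(a+L)) - L * (l * sinh (l*a))))"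
    by (intro sums_add sums_mult sums_diff cosh_even_series cosh_even_series_deriv)
  from this[unfolded power_mult_distrib] show ?thesis
    by (simp add: algebra_simps diff_divide_distrib add_divide_distrib)
qed

lemma cosh_two_point_le:
  fixes a L l p :: real
  assumes "0 \<le> p" "0 \<le> L" "0 \<le> l"
  shows "(1-p) * cosh (l*a) + p * (cosh (l*(a+L)) - L * (l * sinh (l*a))) \<le> cosh (l*a) * (1 + p * exp_rem (l*L))"
proof -
  have "(1-p) * cosh (l*a) + p * (cosh (l*(a+L)) - L * (l * sinh (l*a)))
      = cosh (l*a) * (1 + p * exp_rem (l*L)) - p * (cosh (l*a) - sinh (l*a)) * (sinh (l*L) - l*L)"
    by (simp add: exp_rem_def distrib_left cosh_add flip: cosh_plus_sinh) (simp add: algebra_simps)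
  also have "\<dots> \<le> cosh (l*a) * (1 + p * exp_rem (l*L))"
    using sinh_le_cosh_real[of "l*a"] sinh_ge_self[of "l*L"] assms by simp
  finally show ?thesis .
qed

lemma cosh_norm_two_point_le:
  fixes w Y :: "'a::real_inner"
  assumes p: "0 \<le> p" "p \<le> 1" and l: "0 \<le> l"
  shows "p * cosh (l * norm (w + (1-p) *\<^sub>R Y)) + (1-p) * cosh (l * norm (w - p *\<^sub>R Y))
         \<le> cosh (l * norm w) * (1 + p * exp_rem (l * norm Y))"
proof -
  define a where "a = norm w"
  define L where "L = norm Y"
  define c where "c = w \<bullet> Y"
  have aL: "0 \<le> a" "0 \<le> L" and c: "\<bar>c\<bar> \<le> a * L"
    using Cauchy_Schwarz_ineq2[of w Y] by (auto simp: a_def L_def c_def)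
  have norm_sq: "(norm (w + u *\<^sub>R Y))\<^sup>2 = a\<^sup>2 + 2*u*c + u\<^sup>2*L\<^sup>2" for u
    unfolding a_def L_def c_def power2_norm_eq_inner
    by (simp add: inner_add_left inner_add_right inner_commute[of Y w] algebra_simps power2_eq_square)
  define s1 where "s1 = a\<^sup>2 + 2*(1-p)*c + (1-p)\<^sup>2*L\<^sup>2"
  define s0 where "s0 = a\<^sup>2 - 2*p*c + p\<^sup>2*L\<^sup>2"
  have s1: "(norm (w + (1-p) *\<^sub>R Y))\<^sup>2 = s1" and s0: "(norm (w - p *\<^sub>R Y))\<^sup>2 = s0"
    using norm_sq[of "1-p"] norm_sq[of "-p"] by (simp_all add: s1_def s0_def)
  then have norms: "norm (w + (1-p) *\<^sub>R Y) = sqrt s1" "norm (w - p *\<^sub>R Y) = sqrt s0"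
    and "0 \<le> s1" "0 \<le> s0"
    by (auto simp flip: s1 s0)
  then have lhs: "(\<lambda>k. p * (l ^ (2*k) * s1 ^ k / fact (2*k)) + (1-p) * (l ^ (2*k) * s0 ^ k / fact (2*k)))
      sums (p * cosh (l * norm (w + (1-p) *\<^sub>R Y)) + (1-p) * cosh (l * norm (w - p *\<^sub>R Y)))"
    unfolding norms by (intro sums_add sums_mult cosh_sqrt_series)
  have "p * (l ^ (2*k) * s1 ^ k / fact (2*k)) + (1-p) * (l ^ (2*k) * s0 ^ k / fact (2*k))
      \<le> l ^ (2*k) / fact (2*k) * ((1-p) * a ^ (2*k) + p * ((a+L) ^ (2*k) - 2 * real k * a ^ (2*k-1) * L))" for k
  proof -
    have "p * (l ^ (2*k) * s1 ^ k / fact (2*k)) + (1-p) * (l ^ (2*k) * s0 ^ k / fact (2*k))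
        = l ^ (2*k) / fact (2*k) * (p * s1 ^ k + (1-p) * s0 ^ k)"
      by (simp add: field_simps)
    also have "\<dots> \<le> l ^ (2*k) / fact (2*k)
                      * ((1-p) * a ^ (2*k) + p * ((a+L) ^ (2*k) - 2 * real k * a ^ (2*k-1) * L))"
      unfolding s1_def s0_def using aL c p l by (intro mult_left_mono two_point_power_le) auto
    finally show ?thesis .
  qed
  then have "p * cosh (l * norm (w + (1-p) *\<^sub>R Y)) + (1-p) * cosh (l * norm (w - p *\<^sub>R Y))
      \<le> (1-p) * cosh (l*a) + p * (cosh (l*(a+L)) - L * (l * sinh (l*a)))"
    using lhs cosh_two_point_series by (rule sums_le)
  also have "\<dots> \<le> cosh (l*a) * (1 + p * exp_rem (l*L))"
    using p aL l by (intro cosh_two_point_le) auto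
  finally show ?thesis by (simp add: a_def L_def)
qed

section \<open>A Bernstein inequality for Bernoulli sums in inner-product spaces\<close>

lemma expectation_Pi_pmf_bernoulli_insert:
  fixes f :: "('n::finite \<Rightarrow> bool) \<Rightarrow> real"
  assumes "finite A" "i \<notin> A" "0 \<le> p" "p \<le> 1"
  shows "measure_pmf.expectation (Pi_pmf (insert i A) d (\<lambda>_. bernoulli_pmf p)) f
       = p * measure_pmf.expectation (Pi_pmf A d (\<lambda>_. bernoulli_pmf p)) (\<lambda>b. f (b(i := True)))
       + (1 - p) * measure_pmf.expectation (Pi_pmf A d (\<lambda>_. bernoulli_pmf p)) (\<lambda>b. f (b(i := False)))"
proof -
  have "measure_pmf.expectation (Pi_pmf (insert i A) d (\<lambda>_. bernoulli_pmf p)) f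
      = (\<Sum>y\<in>UNIV. pmf (bernoulli_pmf p) y *\<^sub>R measure_pmf.expectation
            (Pi_pmf A d (\<lambda>_. bernoulli_pmf p) \<bind> (\<lambda>b. return_pmf (b(i := y)))) f)"
    unfolding Pi_pmf_insert'[OF assms(1,2)] by (rule pmf_expectation_bind) auto
  then show ?thesis using assms(3,4) by (simp add: UNIV_bool map_pmf_def[symmetric] algebra_simps)
qed

lemma expectation_cosh_norm_bernoulli_sum_le:
  fixes Y :: "'n::finite \<Rightarrow> 'v::real_inner" and p l :: real
  assumes "finite A" and p: "0 \<le> p" "p \<le> 1" and l: "0 \<le> l"
  shows "measure_pmf.expectation (Pi_pmf A False (\<lambda>_. bernoulli_pmf p))
           (\<lambda>b. cosh (l * norm (z + (\<Sum>i\<in>A. (of_bool (b i) - p) *\<^sub>R Y i))))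
         \<le> cosh (l * norm z) * (\<Prod>i\<in>A. 1 + p * exp_rem (l * norm (Y i)))"
  using assms(1)
proof (induction A arbitrary: z rule: finite_induct)
  case (insert j A)
  let ?P = "Pi_pmf A False (\<lambda>_. bernoulli_pmf p)"
  let ?f = "\<lambda>b. cosh (l * norm (z + (\<Sum>i\<in>insert j A. (of_bool (b i) - p) *\<^sub>R Y i)))"
  define K where "K = (\<Prod>i\<in>A. 1 + p * exp_rem (l * norm (Y i)))"
  have K: "0 \<le> K" unfolding K_def using p exp_rem_nonneg by (intro prod_nonneg) (simp add: add_nonneg_nonneg)
  have step: "measure_pmf.expectation ?P (\<lambda>b. ?f (b(j := y)))
      \<le> cosh (l * norm (z + (of_bool y - p) *\<^sub>R Y j)) * K" for y
  proof -
    have "(\<Sum>i\<in>A. (of_bool ((b(j := y)) i) - p) *\<^sub>R Y i) = (\<Sum>i\<in>A. (of_bool (b i) - p) *\<^sub>R Y i)" for b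
      using insert.hyps(2) by (intro sum.cong) auto
    then show ?thesis
      using insert.IH[of "z + (of_bool y - p) *\<^sub>R Y j"] insert.hyps by (simp add: add.assoc K_def)
  qed
  have "measure_pmf.expectation (Pi_pmf (insert j A) False (\<lambda>_. bernoulli_pmf p)) ?f
      = p * measure_pmf.expectation ?P (\<lambda>b. ?f (b(j := True)))
        + (1-p) * measure_pmf.expectation ?P (\<lambda>b. ?f (b(j := False)))"
    using insert.hyps p by (rule expectation_Pi_pmf_bernoulli_insert)
  also have "\<dots> \<le> (p * cosh (l * norm (z + (1-p) *\<^sub>R Y j)) + (1-p) * cosh (l * norm (z - p *\<^sub>R Y j)))
                    * K"
    using mult_left_mono[OF step[of True], of p] mult_left_mono[OF step[of False], of "1-p"] p
    by (simp add: algebra_simps)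
  also have "\<dots> \<le> cosh (l * norm z) * (1 + p * exp_rem (l * norm (Y j))) * K"
    using cosh_norm_two_point_le[OF p l, of z "Y j"] K by (rule mult_right_mono)
  finally show ?case using insert.hyps by (simp add: K_def mult.assoc)
qed simp

lemma expectation_cosh_norm_bernoulli_sum_le_exp:
  fixes Y :: "'n::finite \<Rightarrow> 'v::real_inner" and p l L :: real
  assumes p: "0 \<le> p" "p \<le> 1" and l: "0 \<le> l" and Y: "\<And>i. i \<in> I \<Longrightarrow> norm (Y i) \<le> L"
  shows "measure_pmf.expectation (Pi_pmf UNIV False (\<lambda>_. bernoulli_pmf p))
           (\<lambda>b. cosh (l * norm (\<Sum>i\<in>I. (of_bool (b i) - p) *\<^sub>R Y i)))
         \<le> exp (p * card I * exp_rem (l * L))"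
proof -
  define Y' where "Y' i = (if i \<in> I then Y i else 0)" for i
  have "(\<Sum>i\<in>I. (of_bool (b i) - p) *\<^sub>R Y i) = 0 + (\<Sum>i\<in>UNIV. (of_bool (b i) - p) *\<^sub>R Y' i)" for b
    unfolding Y'_def by (simp add: sum.If_cases if_distrib[of "\<lambda>v. _ *\<^sub>R v"] cong: if_cong)
  then have "measure_pmf.expectation (Pi_pmf UNIV False (\<lambda>_. bernoulli_pmf p))
           (\<lambda>b. cosh (l * norm (\<Sum>i\<in>I. (of_bool (b i) - p) *\<^sub>R Y i)))
      \<le> (\<Prod>i\<in>UNIV. 1 + p * exp_rem (l * norm (Y' i)))"
    using expectation_cosh_norm_bernoulli_sum_le[OF _ p l, of UNIV 0 Y'] by simp
  also have "\<dots> = (\<Prod>i\<in>I. 1 + p * exp_rem (l * norm (Y i)))"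
    by (rule prod.mono_neutral_cong_right) (auto simp: Y'_def exp_rem_def)
  also have "\<dots> \<le> (\<Prod>i\<in>I. exp (p * exp_rem (l * L)))"
  proof (intro prod_mono conjI)
    fix i assume "i \<in> I"
    then have "exp_rem (l * norm (Y i)) \<le> exp_rem (l * L)"
      using Y l by (intro exp_rem_mono mult_left_mono) auto
    then have "1 + p * exp_rem (l * norm (Y i)) \<le> 1 + p * exp_rem (l * L)"
      using p by (simp add: mult_left_mono)
    also have "\<dots> \<le> exp (p * exp_rem (l * L))" by (rule exp_ge_add_one_self)
    finally show "1 + p * exp_rem (l * norm (Y i)) \<le> exp (p * exp_rem (l * L))" .
    show "0 \<le> 1 + p * exp_rem (l * norm (Y i))" using p exp_rem_nonneg by (simp add: add_nonneg_nonneg)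
  qed
  also have "\<dots> = exp (p * card I * exp_rem (l * L))"
    by (simp add: exp_of_nat_mult[symmetric] mult.commute mult.left_commute)
  finally show ?thesis .
qed

lemma prob_norm_bernoulli_sum_ge:
  fixes Y :: "'n::finite \<Rightarrow> 'v::real_inner" and p L s :: real
  assumes p: "0 < p" "p \<le> 1" and L: "0 < L" and Y: "\<And>i. i \<in> I \<Longrightarrow> norm (Y i) \<le> L"
    and s: "0 < s" "s \<le> p * card I * L / 2"
  shows "measure_pmf.prob (Pi_pmf UNIV False (\<lambda>_. bernoulli_pmf p))
           {b. s \<le> norm (\<Sum>i\<in>I. (of_bool (b i) - p) *\<^sub>R Y i)}
         \<le> 2 * exp (- (s\<^sup>2 / (12 * (p * card I) * L\<^sup>2)))"
proof -
  let ?P = "Pi_pmf UNIV False (\<lambda>_. bernoulli_pmf p)"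
  let ?Z = "\<lambda>b. norm (\<Sum>i\<in>I. (of_bool (b i) - p) *\<^sub>R Y i)"
  define M where "M = p * card I"
  have "0 < M * L" using s unfolding M_def by linarith
  then have M: "0 < M" using L by (simp add: zero_less_mult_iff)
  \<comment> \<open>This choice of \<open>l\<close> keeps \<open>l * L \<le> 1/2\<close>, where \<open>exp_rem_le_sq\<close> applies.\<close>
  define l where "l = s / (M * L\<^sup>2)"
  have l: "0 \<le> l" using s M L by (simp add: l_def)
  have lL: "0 \<le> l * L" "l * L \<le> 1/2"
    using s M L by (auto simp: l_def power2_eq_square divide_le_eq M_def)
  have "measure_pmf.prob ?P {b. s \<le> ?Z b} \<le> measure_pmf.prob ?P {b \<in> space ?P. cosh (l * s) \<le> cosh (l * ?Z b)}"
    using l s by (intro measure_pmf.finite_measure_mono) (auto simp: cosh_real_nonneg_le_iff mult_left_mono)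
  also have "\<dots> \<le> measure_pmf.expectation ?P (\<lambda>b. cosh (l * ?Z b)) / cosh (l * s)"
    by (rule integral_Markov_inequality_measure[where A = UNIV])
       (auto simp: cosh_real_pos integrable_measure_pmf_finite)
  also have "\<dots> \<le> exp (M * (11/12 * (l * L)\<^sup>2)) / (exp (l * s) / 2)"
  proof (rule frac_le)
    have "measure_pmf.expectation ?P (\<lambda>b. cosh (l * ?Z b)) \<le> exp (M * exp_rem (l * L))"
      unfolding M_def using p l Y by (intro expectation_cosh_norm_bernoulli_sum_le_exp) auto
    also have "\<dots> \<le> exp (M * (11/12 * (l * L)\<^sup>2))"
      using exp_rem_le_sq[OF lL] M by simp
    finally show "measure_pmf.expectation ?P (\<lambda>b. cosh (l * ?Z b)) \<le> exp (M * (11/12 * (l * L)\<^sup>2))" .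
    show "exp (l * s) / 2 \<le> cosh (l * s)" by (simp add: cosh_def)
  qed auto
  also have "\<dots> = 2 * exp (M * (11/12 * (l * L)\<^sup>2) - l * s)"
    by (simp add: exp_diff)
  also have "M * (11/12 * (l * L)\<^sup>2) - l * s = - (s\<^sup>2 / (12 * M * L\<^sup>2))"
    using M L by (simp add: l_def field_simps power2_eq_square)
  finally show ?thesis by (simp add: M_def)
qed

lemma prob_norm_bernoulli_sum_ge_le_exp:
  fixes Y :: "'n::finite \<Rightarrow> 'v::real_inner" and p L s \<tau> :: real
  assumes "0 < p" "p \<le> 1" "0 < L" "\<And>i. i \<in> I \<Longrightarrow> norm (Y i) \<le> L" "0 < s" "s \<le> p * card I * L / 2"
    and \<tau>: "\<tau> * (12 * (p * card I) * L\<^sup>2) \<le> s\<^sup>2"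
  shows "measure_pmf.prob (Pi_pmf UNIV False (\<lambda>_. bernoulli_pmf p))
           {b. s \<le> norm (\<Sum>i\<in>I. (of_bool (b i) - p) *\<^sub>R Y i)} \<le> 2 * exp (- \<tau>)"
proof -
  have "0 < p * card I * L" using assms(5,6) by linarith
  then have "0 < p * card I" using assms(3) by (rule zero_less_mult_pos2)
  then have "\<tau> \<le> s\<^sup>2 / (12 * (p * card I) * L\<^sup>2)" using \<tau> assms(3) by (simp add: pos_le_divide_eq)
  then have "2 * exp (- (s\<^sup>2 / (12 * (p * card I) * L\<^sup>2))) \<le> 2 * exp (- \<tau>)" by simp
  moreover have "measure_pmf.prob (Pi_pmf UNIV False (\<lambda>_. bernoulli_pmf p))
      {b. s \<le> norm (\<Sum>i\<in>I. (of_bool (b i) - p) *\<^sub>R Y i)} \<le> 2 * exp (- (s\<^sup>2 / (12 * (p * card I) * L\<^sup>2)))"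
    using assms(1-6) by (rule prob_norm_bernoulli_sum_ge)
  ultimately show ?thesis by linarith
qed

section \<open>Operator norms of the centred data matrices\<close>

lemma norm_vector_matrix_le_opnorm2:
  fixes A :: "real^'n^'d"
  shows "norm (u v* A) \<le> opnorm2 A * norm u"
proof (cases "u v* A = 0")
  case False
  let ?w = "u v* A"
  have "(norm ?w)\<^sup>2 = u \<bullet> (A *v ?w)" by (simp add: power2_norm_eq_inner dot_lmul_matrix)
  also have "\<dots> \<le> norm u * norm (A *v ?w)" by (rule norm_cauchy_schwarz)
  also have "\<dots> \<le> norm u * (opnorm2 A * norm ?w)"
    unfolding opnorm2_def by (intro mult_left_mono onorm) auto
  finally show ?thesis using False by (simp add: power2_eq_square algebra_simps)
qed (simp add: opnorm2_def onorm_pos_le)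

lemma opnorm2_leI:
  fixes A :: "real^'n^'d"
  assumes "0 \<le> c" and "\<And>u. norm (u v* A) \<le> c * norm u"
  shows "opnorm2 A \<le> c"
  unfolding opnorm2_def
proof (rule onorm_le)
  fix v
  show "norm (A *v v) \<le> c * norm v"
  proof (cases "A *v v = 0")
    case False
    let ?w = "A *v v"
    have "(norm ?w)\<^sup>2 = (?w v* A) \<bullet> v" by (simp add: power2_norm_eq_inner dot_lmul_matrix)
    also have "\<dots> \<le> norm (?w v* A) * norm v" by (rule norm_cauchy_schwarz)
    also have "\<dots> \<le> c * norm ?w * norm v" by (intro mult_right_mono assms) auto
    finally show ?thesis using False by (simp add: power2_eq_square algebra_simps)
  qed (simp add: assms)
qed

lemma opnorm2_sq_le_iff:
  fixes A :: "real^'n^'d"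
  assumes "0 \<le> K"
  shows "(opnorm2 A)\<^sup>2 \<le> K \<longleftrightarrow> (\<forall>u. (norm (u v* A))\<^sup>2 \<le> K * (norm u)\<^sup>2)"
proof
  assume K: "(opnorm2 A)\<^sup>2 \<le> K"
  show "\<forall>u. (norm (u v* A))\<^sup>2 \<le> K * (norm u)\<^sup>2"
  proof
    fix u :: "real^'d"
    have "(norm (u v* A))\<^sup>2 \<le> (opnorm2 A * norm u)\<^sup>2"
      by (intro power_mono norm_vector_matrix_le_opnorm2) simp
    also have "\<dots> \<le> K * (norm u)\<^sup>2"
      unfolding power_mult_distrib using K by (rule mult_right_mono) simp
    finally show "(norm (u v* A))\<^sup>2 \<le> K * (norm u)\<^sup>2" .
  qed
next
  assume K: "\<forall>u. (norm (u v* A))\<^sup>2 \<le> K * (norm u)\<^sup>2"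
  have "norm (u v* A) \<le> sqrt K * norm u" for u
    using real_sqrt_le_mono[OF K[rule_format, of u]] by (simp add: real_sqrt_mult)
  then have "opnorm2 A \<le> sqrt K" using assms by (intro opnorm2_leI) auto
  moreover have "0 \<le> opnorm2 A" unfolding opnorm2_def by (intro onorm_pos_le) auto
  ultimately have "(opnorm2 A)\<^sup>2 \<le> (sqrt K)\<^sup>2" by (intro power_mono)
  then show "(opnorm2 A)\<^sup>2 \<le> K" using assms by simp
qed

lemma opnorm2_sq_diff_le:
  fixes A :: "real^'m^'d" and B :: "real^'n^'d"
  assumes "0 < p" "0 \<le> D" and "\<And>u. \<bar>(norm (u v* A))\<^sup>2 - p * (norm (u v* B))\<^sup>2\<bar> \<le> D * (norm u)\<^sup>2"
  shows "\<bar>(opnorm2 A)\<^sup>2 - p * (opnorm2 B)\<^sup>2\<bar> \<le> D"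
proof -
  have A: "(norm (u v* A))\<^sup>2 \<le> (opnorm2 A)\<^sup>2 * (norm u)\<^sup>2"
    and B: "(norm (u v* B))\<^sup>2 \<le> (opnorm2 B)\<^sup>2 * (norm u)\<^sup>2" for u
    using opnorm2_sq_le_iff[of "(opnorm2 A)\<^sup>2" A] opnorm2_sq_le_iff[of "(opnorm2 B)\<^sup>2" B] by auto
  have "(norm (u v* A))\<^sup>2 \<le> (p * (opnorm2 B)\<^sup>2 + D) * (norm u)\<^sup>2" for u
    using assms(3)[of u] mult_left_mono[OF B[of u] less_imp_le[OF assms(1)]] by (simp add: abs_le_iff algebra_simps)
  then have "(opnorm2 A)\<^sup>2 \<le> p * (opnorm2 B)\<^sup>2 + D"
    using assms by (subst opnorm2_sq_le_iff) auto
  moreover have "(norm (u v* B))\<^sup>2 \<le> ((opnorm2 A)\<^sup>2 + D) / p * (norm u)\<^sup>2" for u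
    using assms(3)[of u] A[of u] assms(1) by (simp add: abs_le_iff field_simps)
  then have "(opnorm2 B)\<^sup>2 \<le> ((opnorm2 A)\<^sup>2 + D) / p"
    using assms by (subst opnorm2_sq_le_iff) auto
  ultimately show ?thesis using assms(1) by (simp add: abs_le_iff field_simps)
qed

lemma norm_vector_matrix_Xmat:
  fixes x :: "'n::finite \<Rightarrow> real^'d"
  shows "(norm (u v* Xmat x S))\<^sup>2 = (\<Sum>i\<in>S. (u \<bullet> (x i - centroid x S))\<^sup>2)"
proof -
  have entry: "(u v* Xmat x S) $ i = (if i \<in> S then u \<bullet> (x i - centroid x S) else 0)" for i
    by (simp add: vector_matrix_mult_def Xmat_def inner_vec_def mult.commute if_distrib cong: if_cong)
  have "(norm (u v* Xmat x S))\<^sup>2 = (\<Sum>i\<in>UNIV. ((u v* Xmat x S) $ i)\<^sup>2)"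
    unfolding power2_norm_eq_inner inner_vec_def by (simp add: power2_eq_square)
  also have "\<dots> = (\<Sum>i\<in>S. (u \<bullet> (x i - centroid x S))\<^sup>2)"
    by (simp add: entry if_distrib[of "\<lambda>v. v\<^sup>2"] sum.If_cases cong: if_cong)
  finally show ?thesis .
qed

lemma sum_diff_centroid: "(\<Sum>i\<in>S. x i - centroid x S) = 0"
proof (cases "finite S \<and> S \<noteq> {}")
  case True
  have "(\<Sum>i\<in>S. centroid x S) = real (card S) *\<^sub>R centroid x S" by (rule sum_constant_scaleR)
  also have "\<dots> = sum x S" using True by (simp add: centroid_def)
  finally show ?thesis by (simp add: sum_subtractf)
qed auto

lemma sum_sq_inner_diff_centroid:
  "(\<Sum>i\<in>S. (u \<bullet> (x i - centroid x S))\<^sup>2)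
     = (\<Sum>i\<in>S. (u \<bullet> (x i - c))\<^sup>2) - (u \<bullet> (\<Sum>i\<in>S. x i - c))\<^sup>2 / card S"
proof (cases "finite S \<and> S \<noteq> {}")
  case True
  define N where "N = real (card S)"
  define a where "a i = u \<bullet> (x i - c)" for i
  have N: "0 < N" using True by (simp add: N_def card_gt_0_iff)
  have "centroid x S = c + (1/N) *\<^sub>R (\<Sum>i\<in>S. x i - c)"
    using N by (simp add: centroid_def N_def sum_subtractf sum_constant_scaleR scaleR_diff_right del: sum_constant)
  then have centred: "u \<bullet> (x i - centroid x S) = a i - sum a S / N" for i
    by (simp add: a_def inner_diff_right inner_add_right inner_sum_right)
  have expand: "(\<Sum>i\<in>S. (a i - t)\<^sup>2) = (\<Sum>i\<in>S. (a i)\<^sup>2) - 2 * t * sum a S + N * t\<^sup>2" for t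
    by (simp add: power2_diff sum.distrib sum_subtractf sum_distrib_left sum_distrib_right N_def algebra_simps)
  have "(\<Sum>i\<in>S. (u \<bullet> (x i - centroid x S))\<^sup>2) = (\<Sum>i\<in>S. (a i - sum a S / N)\<^sup>2)"
    using centred by simp
  also have "\<dots> = (\<Sum>i\<in>S. (a i)\<^sup>2) - 2 * (sum a S / N) * sum a S + N * (sum a S / N)\<^sup>2"
    by (rule expand)
  also have "\<dots> = (\<Sum>i\<in>S. (a i)\<^sup>2) - (sum a S)\<^sup>2 / N"
    using N by (simp add: power2_eq_square field_simps)
  finally show ?thesis by (simp add: a_def N_def inner_sum_right)
qed auto

definition outer :: "real^'d \<Rightarrow> real^'d^'d" where
  "outer y = (\<chi> a b. y $ a * y $ b)"

lemma inner_outer: "outer y \<bullet> outer u = (y \<bullet> u)\<^sup>2"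
  by (simp add: outer_def inner_vec_def power2_eq_square sum_product algebra_simps)

lemma norm_outer: "norm (outer y) = (norm y)\<^sup>2"
  by (rule power2_eq_imp_eq) (simp_all add: power2_norm_eq_inner inner_outer)

lemma Xmat_deviation_le:
  fixes x :: "'n::finite \<Rightarrow> real^'d" and p :: real
  assumes "0 < p"
  shows "\<bar>(opnorm2 (Xmat x (R \<inter> {i. b i})))\<^sup>2 - p * (opnorm2 (Xmat x R))\<^sup>2\<bar>
     \<le> norm (\<Sum>i\<in>R. (of_bool (b i) - p) *\<^sub>R outer (x i - centroid x R))
       + (norm (\<Sum>i\<in>R. (of_bool (b i) - p) *\<^sub>R (x i - centroid x R)))\<^sup>2 / card (R \<inter> {i. b i})"
proof -
  define y where "y i = x i - centroid x R" for i
  define R' where "R' = R \<inter> {i. b i}"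
  define N where "N = real (card R')"
  define F where "F = (\<Sum>i\<in>R. (of_bool (b i) - p) *\<^sub>R outer (y i))"
  define v where "v = (\<Sum>i\<in>R. (of_bool (b i) - p) *\<^sub>R y i)"
  have v: "(\<Sum>i\<in>R'. y i) = v"
  proof -
    have "(\<Sum>i\<in>R'. y i) = (\<Sum>i\<in>R. of_bool (b i) *\<^sub>R y i)"
      by (simp add: R'_def sum.inter_restrict) (rule sum.cong; simp)
    also have "\<dots> = v + p *\<^sub>R (\<Sum>i\<in>R. y i)"
      by (simp add: v_def scaleR_diff_left sum_subtractf scaleR_sum_right)
    finally show ?thesis using sum_diff_centroid[of x R] by (simp add: y_def)
  qed
  have restrict: "(\<Sum>i\<in>R'. f i) = (\<Sum>i\<in>R. of_bool (b i) * f i)" for f :: "'n \<Rightarrow> real"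
    by (simp add: R'_def sum.inter_restrict)
  have F: "F \<bullet> outer u = (\<Sum>i\<in>R'. (u \<bullet> y i)\<^sup>2) - p * (\<Sum>i\<in>R. (u \<bullet> y i)\<^sup>2)" for u
  proof -
    have "F \<bullet> outer u = (\<Sum>i\<in>R. (of_bool (b i) - p) * (u \<bullet> y i)\<^sup>2)"
      unfolding F_def inner_sum_left inner_scaleR_left inner_outer by (simp add: inner_commute)
    also have "\<dots> = (\<Sum>i\<in>R. of_bool (b i) * (u \<bullet> y i)\<^sup>2) - p * (\<Sum>i\<in>R. (u \<bullet> y i)\<^sup>2)"
      by (simp add: left_diff_distrib sum_subtractf sum_distrib_left)
    finally show ?thesis by (simp add: restrict)
  qed
  have "\<bar>(norm (u v* Xmat x R'))\<^sup>2 - p * (norm (u v* Xmat x R))\<^sup>2\<bar>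
      \<le> (norm F + (norm v)\<^sup>2 / N) * (norm u)\<^sup>2" for u
  proof -
    have "(norm (u v* Xmat x R'))\<^sup>2 - p * (norm (u v* Xmat x R))\<^sup>2 = F \<bullet> outer u - (u \<bullet> v)\<^sup>2 / N"
      unfolding norm_vector_matrix_Xmat sum_sq_inner_diff_centroid[where c = "centroid x R" and S = R']
      by (simp add: F v[symmetric] y_def N_def)
    moreover have "\<bar>F \<bullet> outer u\<bar> \<le> norm F * (norm u)\<^sup>2"
      using Cauchy_Schwarz_ineq2[of F "outer u"] by (simp add: norm_outer)
    moreover have "(u \<bullet> v)\<^sup>2 / N \<le> (norm v)\<^sup>2 / N * (norm u)\<^sup>2"
      using power_mono[OF Cauchy_Schwarz_ineq2[of u v], of 2]
      by (simp add: N_def divide_right_mono power_mult_distrib algebra_simps)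
    moreover have "0 \<le> (u \<bullet> v)\<^sup>2 / N" by (simp add: N_def)
    ultimately show ?thesis by (simp add: abs_le_iff algebra_simps)
  qed
  then have "\<bar>(opnorm2 (Xmat x R'))\<^sup>2 - p * (opnorm2 (Xmat x R))\<^sup>2\<bar> \<le> norm F + (norm v)\<^sup>2 / N"
    using assms by (intro opnorm2_sq_diff_le) (auto simp: N_def)
  then show ?thesis by (simp add: R'_def N_def F_def v_def y_def)
qed

lemma norm_diff_centroid_le_radius:
  fixes x :: "'n::finite \<Rightarrow> real^'d"
  assumes "S \<in> \<Gamma>" "i \<in> S"
  shows "norm (x i - centroid x S) \<le> radius x \<Gamma>"
  unfolding radius_def
proof (rule Max_ge)
  have "{norm (x i - centroid x S) |S i. S \<in> \<Gamma> \<and> i \<in> S} \<subseteq> (\<lambda>(S, i). norm (x i - centroid x S)) ` UNIV"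
    by auto
  then show "finite {norm (x i - centroid x S) |S i. S \<in> \<Gamma> \<and> i \<in> S}"
    by (rule finite_subset) simp
qed (use assms in auto)

lemma Xmat_large_deviation_cases:
  fixes x :: "'n::finite \<Rightarrow> real^'d" and p t :: real
  assumes p: "0 < p" and t: "0 < t" and M: "0 < p * card R"
    and dev: "t \<le> \<bar>(opnorm2 (Xmat x (R \<inter> {i. b i})))\<^sup>2 - p * (opnorm2 (Xmat x R))\<^sup>2\<bar>"
  shows "t/2 \<le> norm (\<Sum>i\<in>R. (of_bool (b i) - p) *\<^sub>R outer (x i - centroid x R))
       \<or> p * card R / 2 \<le> norm (\<Sum>i\<in>R. (of_bool (b i) - p) *\<^sub>R (1::real))
       \<or> sqrt (t * (p * card R)) / 2 \<le> norm (\<Sum>i\<in>R. (of_bool (b i) - p) *\<^sub>R (x i - centroid x R))"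
proof (rule ccontr)
  define M where "M = p * card R"
  have M0: "0 < M" using M by (simp add: M_def)
  define N where "N = real (card (R \<inter> {i. b i}))"
  define v where "v = (\<Sum>i\<in>R. (of_bool (b i) - p) *\<^sub>R (x i - centroid x R))"
  have "(\<Sum>i\<in>R. of_bool (b i) :: real) = N"
    by (simp add: N_def sum.inter_restrict[symmetric] Int_def)
  then have "(\<Sum>i\<in>R. (of_bool (b i) - p) *\<^sub>R (1::real)) = N - M"
    by (simp add: M_def sum_subtractf)
  moreover assume "\<not> ?thesis"
  ultimately have F: "norm (\<Sum>i\<in>R. (of_bool (b i) - p) *\<^sub>R outer (x i - centroid x R)) < t/2"
    and "\<bar>N - M\<bar> < M/2" and v: "norm v < sqrt (t * M) / 2"
    by (auto simp: M_def v_def)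
  then have N: "M/2 < N" by linarith
  have "(norm v)\<^sup>2 < (sqrt (t * M) / 2)\<^sup>2"
    using v by (intro power_strict_mono) auto
  also have "\<dots> = t * M / 4" using t M0 by (simp add: power_divide)
  finally have "(norm v)\<^sup>2 / N \<le> (t * M / 4) / (M/2)"
    using N M0 t by (intro frac_le) auto
  also have "\<dots> = t/2" using M0 by simp
  finally have "(norm v)\<^sup>2 / N \<le> t/2" .
  then show False
    using Xmat_deviation_le[OF p, of x R b] dev F unfolding N_def v_def by linarith
qed

lemma prob_Xmat_deviation_ge:
  fixes x :: "'n::finite \<Rightarrow> real^'d" and p t r :: real
  assumes p: "0 < p" "p \<le> 1" and t: "0 < t" "t \<le> p * card R * r\<^sup>2"
    and r: "\<And>i. i \<in> R \<Longrightarrow> norm (x i - centroid x R) \<le> r"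
  shows "measure_pmf.prob (Pi_pmf UNIV False (\<lambda>_. bernoulli_pmf p))
           {b. \<bar>(opnorm2 (Xmat x (R \<inter> {i. b i})))\<^sup>2 - p * (opnorm2 (Xmat x R))\<^sup>2\<bar> \<ge> t}
         \<le> 6 * exp (- (t\<^sup>2 / (48 * p * card R * r ^ 4)))"
proof -
  let ?P = "Pi_pmf UNIV False (\<lambda>_. bernoulli_pmf p)"
  define M where "M = p * card R"
  define \<tau> where "\<tau> = t\<^sup>2 / (48 * M * r ^ 4)"
  have Mr: "0 < M * r\<^sup>2" "t \<le> M * r\<^sup>2" using t by (simp_all add: M_def)
  then have M: "0 < M" by (metis zero_le_power2 mult_nonpos_nonneg not_le)
  then obtain i where "i \<in> R" by (force simp: M_def)
  then have "0 \<le> r" using r[of i] by (meson norm_ge_zero order_trans)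
  moreover have "r \<noteq> 0" using Mr(1) by auto
  ultimately have r0: "0 < r" by simp
  define E1 where "E1 = {b. t/2 \<le> norm (\<Sum>i\<in>R. (of_bool (b i) - p) *\<^sub>R outer (x i - centroid x R))}"
  define E2 where "E2 = {b. M/2 \<le> norm (\<Sum>i\<in>R. (of_bool (b i) - p) *\<^sub>R (1::real))}"
  define E3 where "E3 = {b. sqrt (t * M) / 2 \<le> norm (\<Sum>i\<in>R. (of_bool (b i) - p) *\<^sub>R (x i - centroid x R))}"
  have "norm (outer (x i - centroid x R)) \<le> r\<^sup>2" if "i \<in> R" for i
    using r[OF that] by (simp add: norm_outer power_mono)
  then have P1: "measure_pmf.prob ?P E1 \<le> 2 * exp (- \<tau>)"
    unfolding E1_def using p t r0 M
    by (intro prob_norm_bernoulli_sum_ge_le_exp[where L = "r\<^sup>2"])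
       (auto simp: M_def \<tau>_def power2_eq_square power4_eq_xxxx field_simps)
  have "t\<^sup>2 \<le> (M * r\<^sup>2)\<^sup>2" using Mr t by (intro power_mono) auto
  then have P2: "measure_pmf.prob ?P E2 \<le> 2 * exp (- \<tau>)"
    unfolding E2_def using p M r0
    by (intro prob_norm_bernoulli_sum_ge_le_exp[where L = 1])
       (auto simp: M_def \<tau>_def power2_eq_square power4_eq_xxxx field_simps)
  have "t * M \<le> (M * r)\<^sup>2" using Mr M by (simp add: power2_eq_square mult_left_mono mult.commute mult.left_commute)
  then have "sqrt (t * M) \<le> M * r" using M r0 by (simp add: real_le_lsqrt)
  moreover have "0 < t * M" using t M by simp
  ultimately have P3: "measure_pmf.prob ?P E3 \<le> 2 * exp (- \<tau>)"
    unfolding E3_def using p t r r0 M Mr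
    by (intro prob_norm_bernoulli_sum_ge_le_exp[where L = r])
       (auto simp: M_def \<tau>_def power2_eq_square power4_eq_xxxx field_simps)
  have "{b. \<bar>(opnorm2 (Xmat x (R \<inter> {i. b i})))\<^sup>2 - p * (opnorm2 (Xmat x R))\<^sup>2\<bar> \<ge> t} \<subseteq> E1 \<union> E2 \<union> E3"
    using Xmat_large_deviation_cases[OF p(1) t(1)] M by (auto simp: E1_def E2_def E3_def M_def)
  then have "measure_pmf.prob ?P {b. \<bar>(opnorm2 (Xmat x (R \<inter> {i. b i})))\<^sup>2 - p * (opnorm2 (Xmat x R))\<^sup>2\<bar> \<ge> t}
      \<le> measure_pmf.prob ?P (E1 \<union> E2 \<union> E3)"
    by (intro measure_pmf.finite_measure_mono) auto
  also have "\<dots> \<le> measure_pmf.prob ?P E1 + measure_pmf.prob ?P E2 + measure_pmf.prob ?P E3"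
    using measure_Un_le[of "E1 \<union> E2" "measure_pmf ?P" E3] measure_Un_le[of E1 "measure_pmf ?P" E2] by simp
  also have "\<dots> \<le> 6 * exp (- \<tau>)" using P1 P2 P3 by simp
  finally show ?thesis by (simp add: \<tau>_def M_def mult.assoc)
qed

theorem lemma13:
  fixes x :: "'n::finite \<Rightarrow> real^'d" and \<Gamma> :: "'n set set" and R :: "'n set"
    and p t :: real
  assumes "partition_on UNIV \<Gamma>" and "R \<in> \<Gamma>"
    and "0 < p" and "p \<le> 1"
    and "0 \<le> t" and "t \<le> p * real (card R) * (radius x \<Gamma>)\<^sup>2"
  shows "measure_pmf.prob (Pi_pmf UNIV False (\<lambda>_. bernoulli_pmf p))
           {b. \<bar>(opnorm2 (Xmat x (R \<inter> {i. b i})))\<^sup>2 - p * (opnorm2 (Xmat x R))\<^sup>2\<bar> \<ge> t}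
         \<le> (3 * real CARD('d) + 3) * exp (- (t\<^sup>2 / (48 * p * real (card R) * (radius x \<Gamma>) ^ 4)))"
proof (cases "t = 0")
  case True
  have "measure_pmf.prob (Pi_pmf UNIV False (\<lambda>_. bernoulli_pmf p))
      {b. \<bar>(opnorm2 (Xmat x (R \<inter> {i. b i})))\<^sup>2 - p * (opnorm2 (Xmat x R))\<^sup>2\<bar> \<ge> t} \<le> 1"
    by simp
  then show ?thesis using True by simp
next
  case False
  have "\<And>i. i \<in> R \<Longrightarrow> norm (x i - centroid x R) \<le> radius x \<Gamma>"
    using assms(2) by (rule norm_diff_centroid_le_radius)
  then have "measure_pmf.prob (Pi_pmf UNIV False (\<lambda>_. bernoulli_pmf p))
      {b. \<bar>(opnorm2 (Xmat x (R \<inter> {i. b i})))\<^sup>2 - p * (opnorm2 (Xmat x R))\<^sup>2\<bar> \<ge> t}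
      \<le> 6 * exp (- (t\<^sup>2 / (48 * p * card R * (radius x \<Gamma>) ^ 4)))"
    using assms(3-6) False by (intro prob_Xmat_deviation_ge) auto
  also have "\<dots> \<le> (3 * real CARD('d) + 3) * exp (- (t\<^sup>2 / (48 * p * real (card R) * (radius x \<Gamma>) ^ 4)))"
    by (intro mult_right_mono) auto
  finally show ?thesis .
qed

end
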